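(* Let $k\ge 2$ and let $G$ be a $k$-regular bipartite graph. Then $\chi_{ei}(G)=2$.
   Context: All graphs are finite and simple. A path $P_4$ in $G$ is a sequence $uxyv$ of four distinct vertices with $ux,xy,yv\in E(G)$; $u,v$ are its end vertices. An $e$-injective $k$-coloring of $G$ is a function $f:V(G)\to\{1,\dots,k\}$ with $f(u)\ne f(v)$ whenever $u,v$ are the end vertices of some path $P_4$ in $G$; $\chi_{ei}(G)$ is the least such $k$. *)

theory Defs
  imports Main
begin

definition simple_graph :: "'a set \<Rightarrow> ('a \<Rightarrow> 'a \<Rightarrow> bool) \<Rightarrow> bool" where
  "simple_graph V E \<longleftrightarrow> finite V \<and> V \<noteq> {} \<and>
     (\<forall>u v. E u v \<longrightarrow> u \<in> V \<and> v \<in> V) \<and>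
     (\<forall>u v. E u v \<longrightarrow> E v u) \<and> (\<forall>v. \<not> E v v)"

definition degree :: "'a set \<Rightarrow> ('a \<Rightarrow> 'a \<Rightarrow> bool) \<Rightarrow> 'a \<Rightarrow> nat" where
  "degree V E v = card {u \<in> V. E v u}"

definition regular :: "'a set \<Rightarrow> ('a \<Rightarrow> 'a \<Rightarrow> bool) \<Rightarrow> nat \<Rightarrow> bool" where
  "regular V E k \<longleftrightarrow> (\<forall>v \<in> V. degree V E v = k)"

definition bipartite :: "'a set \<Rightarrow> ('a \<Rightarrow> 'a \<Rightarrow> bool) \<Rightarrow> bool" where
  "bipartite V E \<longleftrightarrow> (\<exists>A B. A \<union> B = V \<and> A \<inter> B = {} \<and>
     (\<forall>u v. E u v \<longrightarrow> (u \<in> A \<and> v \<in> B) \<or> (u \<in> B \<and> v \<in> A)))"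

definition is_P4 :: "('a \<Rightarrow> 'a \<Rightarrow> bool) \<Rightarrow> 'a \<Rightarrow> 'a \<Rightarrow> 'a \<Rightarrow> 'a \<Rightarrow> bool" where
  "is_P4 E u x y v \<longleftrightarrow> distinct [u, x, y, v] \<and> E u x \<and> E x y \<and> E y v"

definition e_injective_coloring ::
  "'a set \<Rightarrow> ('a \<Rightarrow> 'a \<Rightarrow> bool) \<Rightarrow> nat \<Rightarrow> ('a \<Rightarrow> nat) \<Rightarrow> bool" where
  "e_injective_coloring V E k f \<longleftrightarrow>
     (\<forall>v \<in> V. f v \<in> {1..k}) \<and>
     (\<forall>u x y v. is_P4 E u x y v \<longrightarrow> f u \<noteq> f v)"

definition chi_ei :: "'a set \<Rightarrow> ('a \<Rightarrow> 'a \<Rightarrow> bool) \<Rightarrow> nat" where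
  "chi_ei V E = (LEAST k. \<exists>f. e_injective_coloring V E k f)"

end

theory Submission
  imports Defs
begin

text \<open>Colouring each vertex by its side of the bipartition is e-injective, because the two ends of a
  path with three edges lie on opposite sides. Conversely, two colours are needed as soon as some
  \<open>P\<^sub>4\<close> exists, and in a bipartite graph of minimum degree at least 2 one is found by walking three
  steps without immediately backtracking: the walk cannot close up, since there are no odd cycles.\<close>

lemma bipartite_imp_side:
  assumes "bipartite V E"
  shows "\<exists>A. \<forall>u v. E u v \<longrightarrow> (u \<in> A \<longleftrightarrow> v \<notin> A)"
proof -
  from assms obtain A B where "A \<inter> B = {}"
    and "\<And>u v. E u v \<Longrightarrow> (u \<in> A \<and> v \<in> B) \<or> (u \<in> B \<and> v \<in> A)"
    unfolding bipartite_def by blast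
  then have "\<forall>u v. E u v \<longrightarrow> (u \<in> A \<longleftrightarrow> v \<notin> A)" by blast
  then show ?thesis ..
qed

lemma bipartite_walk3_ends_distinct:
  assumes "bipartite V E" "E u x" "E x y" "E y v"
  shows "u \<noteq> v"
proof -
  obtain A where "\<forall>u v. E u v \<longrightarrow> (u \<in> A \<longleftrightarrow> v \<notin> A)"
    using bipartite_imp_side[OF assms(1)] by blast
  then have "u \<in> A \<longleftrightarrow> v \<notin> A" using assms(2-4) by blast
  then show ?thesis by blast
qed

lemma bipartite_e_injective_coloring_2:
  assumes "bipartite V E"
  shows "\<exists>f. e_injective_coloring V E 2 f"
proof -
  obtain A where side: "\<forall>u v. E u v \<longrightarrow> (u \<in> A \<longleftrightarrow> v \<notin> A)"
    using bipartite_imp_side[OF assms] by blast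
  have "e_injective_coloring V E 2 (\<lambda>z. if z \<in> A then 1 else 2)"
    unfolding e_injective_coloring_def is_P4_def
  proof (intro conjI allI impI ballI)
    fix u x y v assume "distinct [u, x, y, v] \<and> E u x \<and> E x y \<and> E y v"
    then have "u \<in> A \<longleftrightarrow> v \<notin> A" using side by blast
    then show "(if u \<in> A then 1 else 2) \<noteq> (if v \<in> A then 1 else (2::nat))" by auto
  qed auto
  then show ?thesis by blast
qed

lemma e_injective_coloring_P4_ge_2:
  assumes "e_injective_coloring V E k f" "is_P4 E u x y v" "u \<in> V" "v \<in> V"
  shows "2 \<le> k"
proof (rule ccontr)
  assume "\<not> 2 \<le> k"
  moreover have "f u \<in> {1..k}" "f v \<in> {1..k}"
    using assms(1,3,4) unfolding e_injective_coloring_def by auto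
  ultimately have "f u = f v" by auto
  moreover have "f u \<noteq> f v" using assms(1,2) unfolding e_injective_coloring_def by blast
  ultimately show False by contradiction
qed

lemma degree_ge_2_obtain_neighbour_other:
  assumes "2 \<le> degree V E v"
  obtains y where "E v y" "y \<noteq> a"
proof -
  have "\<not> {u \<in> V. E v u} \<subseteq> {a}"
  proof
    assume "{u \<in> V. E v u} \<subseteq> {a}"
    then have "card {u \<in> V. E v u} \<le> card {a}" by (intro card_mono) simp_all
    then have "degree V E v \<le> 1" unfolding degree_def by simp
    with assms show False by simp
  qed
  then show thesis using that by blast
qed

lemma bipartite_min_degree_2_obtain_P4:
  assumes "simple_graph V E" "bipartite V E" "\<And>v. v \<in> V \<Longrightarrow> 2 \<le> degree V E v"
  obtains u x y v where "is_P4 E u x y v" "u \<in> V" "v \<in> V"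
proof -
  from assms(1) have "V \<noteq> {}" and in_V: "\<And>u v. E u v \<Longrightarrow> u \<in> V \<and> v \<in> V"
    and irrefl: "\<And>v. \<not> E v v"
    unfolding simple_graph_def by auto
  then obtain u where u: "u \<in> V" by blast
  obtain x where x: "E u x" using assms(3)[OF u] by (rule degree_ge_2_obtain_neighbour_other)
  have "2 \<le> degree V E x" using assms(3) in_V[OF x] by blast
  then obtain y where y: "E x y" "y \<noteq> u" by (rule degree_ge_2_obtain_neighbour_other)
  have "2 \<le> degree V E y" using assms(3) in_V[OF y(1)] by blast
  then obtain v where v: "E y v" "v \<noteq> x" by (rule degree_ge_2_obtain_neighbour_other)
  have "u \<noteq> v" using assms(2) x y(1) v(1) by (rule bipartite_walk3_ends_distinct)
  with x y v irrefl[of u] irrefl[of x] irrefl[of y] have "is_P4 E u x y v"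
    unfolding is_P4_def by auto
  moreover have "v \<in> V" using in_V[OF v(1)] by blast
  ultimately show thesis using u by (intro that)
qed

theorem proposition3p6:
  fixes V :: "'a set" and E :: "'a \<Rightarrow> 'a \<Rightarrow> bool" and k :: nat
  assumes "simple_graph V E"
    and "k \<ge> 2"
    and "regular V E k"
    and "bipartite V E"
  shows "chi_ei V E = 2"
proof -
  have "\<And>v. v \<in> V \<Longrightarrow> 2 \<le> degree V E v"
    using assms(2,3) unfolding regular_def by simp
  with assms(1,4) obtain u x y v where P4: "is_P4 E u x y v" "u \<in> V" "v \<in> V"
    by (rule bipartite_min_degree_2_obtain_P4)
  show ?thesis unfolding chi_ei_def
  proof (rule Least_equality)
    show "\<exists>f. e_injective_coloring V E 2 f"
      using assms(4) by (rule bipartite_e_injective_coloring_2)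
  next
    fix m assume "\<exists>f. e_injective_coloring V E m f"
    then obtain f where "e_injective_coloring V E m f" ..
    then show "2 \<le> m" using P4 by (rule e_injective_coloring_P4_ge_2)
  qed
qed

end
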